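(* Consider the algorithm described in the context for solving the problem there, and let the problem assumption and the random-sample assumption hold. Define the auxiliary stochastic sequence $\{u_k\}$ by $u_0:=x_0$ and $$u_{k+1}\triangleq \mathcal{P}_X\left(u_k+N^{-1}\gamma_k({w}_{f,k}+e_{f,k}+\rho_k{w}_{F,k}+\rho_k{e}_{F,k})\right).$$ Then for any $y \in X$ and $k \geq 0$, \begin{align*} & (\gamma_k\rho_k)^rF(y)^T(y_{k+1}-y) + (\gamma_k\rho_k)^{r}\rho_k^{-1}(f(y_{k+1})-f(y)) \\ & \leq 0.5N(\gamma_k\rho_k)^{r-1}\left(\|x_k-y\|^2 -\|x_{k+1}-y\|^2+\|u_k-y\|^2-\|u_{k+1}-y\|^2\right) \\ &+2N^{-1}(\gamma_k\rho_k)^{r+1}\rho_k^{-2}\left(6C_f^2+3\|\tilde{w}_{f,k}\|^2+3\|\tilde{e}_{f,k}\|^2+4\|{w}_{f,k}\|^2+4\|e_{f,k}\|^2\right) \\ &+2N^{-1}(\gamma_k\rho_k)^{r+1}\left(6C_F^2+3\|\tilde{w}_{F,k}\|^2+3\|\tilde{e}_{F,k}\|^2+4\|{w}_{F,k}\|^2+4\|{e}_{F,k}\|^2\right) \\ &+\gamma_k^r\rho_k^{r-1}\left({w}_{f,k}+e_{f,k}+\rho_k{w}_{F,k}+\rho_k{e}_{F,k}\right)^T(u_k-y_{k+1}). \end{align*}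
   Context: Setting: $N\ge1$, positive integers $n_1,\dots,n_N$ with $n=\sum_i n_i$, sets $X_i\subseteq\mathbb R^{n_i}$, $X=\prod_{i=1}^N X_i$; $\mathcal P_X,\mathcal P_{X_i}$ are Euclidean projections. $\xi$ is a random vector on $(\Omega,\mathcal F,\mathbb P)$ with values in $\mathbb R^d$. $f:\mathbb R^n\times\mathbb R^d\to\mathbb R$, $F=(F_1,\dots,F_N):\mathbb R^n\times\mathbb R^d\to\mathbb R^n$ with $F_i$ valued in $\mathbb R^{n_i}$; $f(x):=\mathbb E[f(x,\xi)]$, $F(x):=\mathbb E[F(x,\xi)]$. Problem: minimize $f(x)$ subject to $x\in\mathrm{SOL}(X,F):=\{x\in X:(z-x)^TF(x)\ge0\ \forall z\in X\}$. $\tilde\nabla f(x)$ denotes a subgradient of $f$ at $x$ and $\tilde\nabla f(x,\xi)$ a stochastic subgradient; subscript $i$ denotes the $i$-th block. $\mathbf U_\ell\in\mathbb R^{n\times n_\ell}$ with $[\mathbf U_1,\dots,\mathbf U_N]=\mathbf I_n$. Problem assumption: (i) $F(\cdot)$ is single-valued, continuous and monotone on its domain; (ii) $f(\cdot)$ is real-valued and convex on its domain; (iii) $X\subseteq\mathrm{int}(\mathrm{dom}(F)\cap\mathrm{dom}(f))$ is nonempty, compact and convex (each $X_i$ closed convex). $C_F,C_f>0$ are constants with $\|F(x)\|\le C_F$ and $\|\tilde\nabla f(x)\|\le C_f$ for all $\tilde\nabla f(x)\in\partial f(x)$, $x\in X$. Algorithm: given $x_0,y_0\in X$, positive sequences $\{\gamma_k\},\{\rho_k\}$,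 a scalar $r<1$; for $k=0,1,\dots$: draw $i_k,\tilde i_k$ uniformly from $\{1,\dots,N\}$ and realizations $\xi_k,\tilde\xi_k$ of $\xi$; $y_{k+1}^{(i)}=\mathcal P_{X_i}\big(x_k^{(i)}-\gamma_k(\tilde\nabla_i f(x_k,\tilde\xi_k)+\rho_kF_i(x_k,\tilde\xi_k))\big)$ if $i=\tilde i_k$, else $y_{k+1}^{(i)}=x_k^{(i)}$; $x_{k+1}^{(i)}=\mathcal P_{X_i}\big(x_k^{(i)}-\gamma_k(\tilde\nabla_i f(y_{k+1},\xi_k)+\rho_kF_i(y_{k+1},\xi_k))\big)$ if $i=i_k$, else $x_{k+1}^{(i)}=x_k^{(i)}$. Errors: $\tilde w_{F,k}=F(x_k,\tilde\xi_k)-F(x_k)$, $\tilde w_{f,k}=\tilde\nabla f(x_k,\tilde\xi_k)-\tilde\nabla f(x_k)$, $w_{F,k}=F(y_{k+1},\xi_k)-F(y_{k+1})$, $w_{f,k}=\tilde\nabla f(y_{k+1},\xi_k)-\tilde\nabla f(y_{k+1})$, $\tilde e_{F,k}=N\mathbf U_{\tilde i_k}F_{\tilde i_k}(x_k,\tilde\xi_k)-F(x_k,\tilde\xi_k)$, $\tilde e_{f,k}=N\mathbf U_{\tilde i_k}\tilde\nabla_{\tilde i_k}f(x_k,\tilde\xi_k)-\tilde\nabla f(x_k,\tilde\xi_k)$, $e_{F,k}=N\mathbf U_{i_k}F_{i_k}(y_{k+1},\xi_k)-F(y_{k+1},\xi_k)$, $e_{f,k}=N\mathbf U_{i_k}\tilde\nabla_{i_k}f(y_{k+1},\xi_k)-\tilde\nabla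 f(y_{k+1},\xi_k)$. Random-sample assumption: (a) the $\tilde\xi_k,\xi_k$ are i.i.d. copies of $\xi$, the $\tilde i_k,i_k$ i.i.d. uniform on $\{1,\dots,N\}$, all mutually independent; (b) $F(\cdot,\tilde\xi_k)$, $F(\cdot,\xi_k)$ are unbiased for $F(\cdot)$ and $\tilde\nabla f(\cdot,\tilde\xi_k)$, $\tilde\nabla f(\cdot,\xi_k)$ unbiased for $\tilde\nabla f(\cdot)$; (c) there exist $\nu_F,\nu_f>0$ with $\mathbb E[\|F(x,\xi)-F(x)\|^2\mid x]\le\nu_F^2$ and $\mathbb E[\|\tilde\nabla f(x,\xi)-\tilde\nabla f(x)\|^2\mid x]\le\nu_f^2$. *)

theory Defs
  imports "HOL-Analysis.Analysis"
begin

text \<open>Block structure: coordinates of R^n are partitioned into blocks 1..N by a map blk.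
  blockproj blk i x is U_i U_i^T x, i.e. x with all coordinates outside block i set to 0;
  the block space R^{n_i} is identified with the vectors supported on block i.\<close>

definition blockproj :: "('n::finite \<Rightarrow> nat) \<Rightarrow> nat \<Rightarrow> real^'n \<Rightarrow> real^'n" where
  "blockproj blk i x = (\<chi> j. if blk j = i then x $ j else 0)"

end

theory Submission
  imports Defs
begin

(* The x-update is a projected step on a single block, so the variational inequality of the
   projection onto X_i gives the three-point estimate
     |x' - z|^2 <= |x - z|^2 - |x - x'|^2 - 2 (gamma/N) <V, x' - z>,
   where V = N U_i U_i^T (sampled direction) = g(y) + rho F(y) + W and the term
   W = w_f + e_f + rho w_F + rho e_F collects the sampling and block-sampling errors.
   Moving the inner product from x' to y costs |x - x'| and |x - y| <= (gamma/N) |R|, which are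
   absorbed into squared step lengths.
   The error term <W, y - z> has no sign; it is split as <W, u - z> - <W, u - y>, and the first
   part is absorbed by the nonexpansive projected step defining u'. Convexity of f and
   monotonicity of F bound the left-hand side by <g(y) + rho F(y), y - z>, the squared steps are
   bounded by (a_1 + ... + a_m)^2 <= m (a_1^2 + ... + a_m^2), and multiplying by
   N (gamma rho)^(r-1) / 2 gives the claim. *)

lemma blockproj_add: "blockproj blk i (a + b) = blockproj blk i a + blockproj blk i b"
  by (simp add: blockproj_def vec_eq_iff)

lemma blockproj_diff: "blockproj blk i (a - b) = blockproj blk i a - blockproj blk i b"
  by (simp add: blockproj_def vec_eq_iff)

lemma blockproj_scaleR: "blockproj blk i (c *\<^sub>R a) = c *\<^sub>R blockproj blk i a"
  by (simp add: blockproj_def vec_eq_iff)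

lemma blockproj_idem: "blockproj blk i (blockproj blk i a) = blockproj blk i a"
  by (simp add: blockproj_def vec_eq_iff)

lemma blockproj_blockproj_neq: "j \<noteq> i \<Longrightarrow> blockproj blk j (blockproj blk i a) = 0"
  by (simp add: blockproj_def vec_eq_iff)

lemma inner_blockproj_left: "blockproj blk i a \<bullet> b = blockproj blk i a \<bullet> blockproj blk i b"
  unfolding blockproj_def inner_vec_def by (rule sum.cong) auto

lemma blockproj_eq_self: "\<forall>j. blk j \<noteq> i \<longrightarrow> v $ j = 0 \<Longrightarrow> blockproj blk i v = v"
  by (auto simp: blockproj_def vec_eq_iff)

lemma blockproj_eq_0: "\<forall>j. blk j \<noteq> i \<longrightarrow> v $ j = 0 \<Longrightarrow> j \<noteq> i \<Longrightarrow> blockproj blk j v = 0"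
  by (auto simp: blockproj_def vec_eq_iff)

lemma linear_blockproj: "linear (blockproj blk i)"
  by (rule linearI) (simp_all add: blockproj_add blockproj_scaleR)

lemma convex_block_product:
  assumes "X = {v. \<forall>i\<in>I. blockproj blk i v \<in> Xi i}" and "\<forall>i\<in>I. convex (Xi i)"
  shows "convex X"
proof -
  have "X = (\<Inter>i\<in>I. blockproj blk i -` Xi i)" using assms(1) by auto
  then show ?thesis
    using assms(2) by (simp add: convex_INT convex_linear_vimage linear_blockproj)
qed

lemma block_update_in_product:
  assumes X_def: "X = {v. \<forall>i\<in>I. blockproj blk i v \<in> Xi i}"
    and Xi_sub: "\<forall>i\<in>I. Xi i \<subseteq> {v. \<forall>j. blk j \<noteq> i \<longrightarrow> v $ j = 0}"
    and "closed (Xi i)" and x: "x \<in> X" and i: "i \<in> I"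
  shows "x - blockproj blk i x + closest_point (Xi i) v \<in> X"
proof -
  define c where "c = closest_point (Xi i) v"
  have "blockproj blk i x \<in> Xi i" using x i X_def by blast
  then have c: "c \<in> Xi i" unfolding c_def using \<open>closed (Xi i)\<close> closest_point_in_set by blast
  then have c_supp: "\<forall>j. blk j \<noteq> i \<longrightarrow> c $ j = 0" using Xi_sub i by blast
  have "blockproj blk j (x - blockproj blk i x + c) \<in> Xi j" if j: "j \<in> I" for j
  proof (cases "j = i")
    case True
    then show ?thesis
      using c by (simp add: blockproj_add blockproj_diff blockproj_idem blockproj_eq_self[OF c_supp])
  next
    case False
    then show ?thesis
      using x j X_def
      by (simp add: blockproj_add blockproj_diff blockproj_blockproj_neq blockproj_eq_0[OF c_supp])
  qed
  then show ?thesis unfolding c_def[symmetric] using X_def by blast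
qed

lemma block_iterates_in_product:
  assumes X_def: "X = {v. \<forall>i\<in>I. blockproj blk i v \<in> Xi i}"
    and Xi_sub: "\<forall>i\<in>I. Xi i \<subseteq> {v. \<forall>j. blk j \<noteq> i \<longrightarrow> v $ j = 0}"
    and "\<forall>i\<in>I. closed (Xi i)" and "x 0 \<in> X" and "\<forall>m. i m \<in> I"
    and "\<forall>m. x (Suc m) = x m - blockproj blk (i m) (x m) + closest_point (Xi (i m)) (v m)"
  shows "x m \<in> X"
  using assms(3-6) by (induction m) (auto intro: block_update_in_product[OF X_def Xi_sub])

lemma block_projected_step_descent:
  fixes x z p :: "real^'n"
  assumes S: "closed S" "convex S" "S \<subseteq> {v. \<forall>j. blk j \<noteq> i \<longrightarrow> v $ j = 0}"
    and zS: "blockproj blk i z \<in> S"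
    and x': "x' = x - blockproj blk i x + closest_point S (blockproj blk i (x - p))"
  shows "(norm (x' - z))\<^sup>2
    \<le> (norm (x - z))\<^sup>2 - (norm (x - x'))\<^sup>2 - 2 * (blockproj blk i p \<bullet> (x' - z))"
proof -
  define B where "B = blockproj blk i"
  define c where "c = closest_point S (B (x - p))"
  have "c \<in> S" unfolding c_def using S zS closest_point_in_set by blast
  then have Bc: "B c = c" using S(3) blockproj_eq_self unfolding B_def by blast
  have x'_Bx: "x' - x = B (c - x)" using Bc x' by (simp add: B_def c_def blockproj_diff)
  have B_x'z: "B (x' - z) = c - B z"
    using Bc x' by (simp add: B_def c_def blockproj_diff blockproj_add blockproj_idem)
  have "(B (x - p) - c) \<bullet> (B z - c) \<le> 0"
    unfolding c_def using closest_point_dot[OF S(2,1) zS[folded B_def]] .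
  then have "(c - B x) \<bullet> (c - B z) \<le> - (B p \<bullet> (c - B z))"
    by (simp add: B_def blockproj_diff inner_commute algebra_simps)
  moreover have "(x' - x) \<bullet> (x' - z) = (c - B x) \<bullet> (c - B z)"
    using inner_blockproj_left[of blk i "c - x" "x' - z"] x'_Bx B_x'z Bc
    by (simp add: B_def blockproj_diff)
  moreover have "B p \<bullet> (c - B z) = B p \<bullet> (x' - z)"
    using inner_blockproj_left[of blk i p "x' - z"] B_x'z by (simp add: B_def)
  moreover have "(norm (x' - z))\<^sup>2
      = (norm (x - z))\<^sup>2 - (norm (x - x'))\<^sup>2 + 2 * ((x' - x) \<bullet> (x' - z))"
    by (simp add: power2_norm_eq_inner inner_commute algebra_simps)
  ultimately show ?thesis unfolding B_def by linarith
qed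

lemma block_projected_step_norm_le:
  fixes x p :: "real^'n"
  assumes "closed S" "convex S" "blockproj blk i x \<in> S"
    and y': "y' = x - blockproj blk i x + closest_point S (blockproj blk i (x - p))"
  shows "norm (x - y') \<le> norm (blockproj blk i p)"
proof -
  have "dist (closest_point S (blockproj blk i (x - p))) (closest_point S (blockproj blk i x))
        \<le> dist (blockproj blk i (x - p)) (blockproj blk i x)"
    using assms(1-3) by (intro closest_point_lipschitz) auto
  then show ?thesis
    using y' closest_point_self[OF assms(3)] by (simp add: dist_norm blockproj_diff norm_minus_commute)
qed

lemma blockproj_sampled_step:
  fixes s t a b :: "real^'n"
  assumes "n \<noteq> 0"
  shows "blockproj blk i (\<gamma> *\<^sub>R (s + \<rho> *\<^sub>R t)) = (\<gamma> / n) *\<^sub>R (a + \<rho> *\<^sub>R b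
    + (s - a) + (n *\<^sub>R blockproj blk i s - s) + \<rho> *\<^sub>R (t - b) + \<rho> *\<^sub>R (n *\<^sub>R blockproj blk i t - t))"
  using assms by (simp add: blockproj_add blockproj_scaleR algebra_simps)

lemma norm_sum_list_power2_le:
  fixes vs :: "'a::real_normed_vector list"
  shows "(norm (sum_list vs))\<^sup>2 \<le> length vs * sum_list (map (\<lambda>v. (norm v)\<^sup>2) vs)"
proof -
  have "norm (sum_list vs) \<le> (\<Sum>i<length vs. norm (vs ! i))"
    unfolding sum_list_sum_nth atLeast0LessThan by (rule norm_sum)
  then have "(norm (sum_list vs))\<^sup>2 \<le> (\<Sum>i<length vs. norm (vs ! i))\<^sup>2"
    by (simp add: power_mono)
  also have "\<dots> \<le> (\<Sum>i<length vs. (norm (vs ! i))\<^sup>2) * length vs"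
    using sum_squared_le_sum_of_squares[of "\<lambda>i. norm (vs ! i)" "{..<length vs}"] by simp
  finally show ?thesis
    by (simp add: sum_list_sum_nth atLeast0LessThan mult.commute)
qed

lemma extragradient_three_point:
  fixes x x' y z p q :: "'a::real_inner"
  assumes x': "(norm (x' - z))\<^sup>2 \<le> (norm (x - z))\<^sup>2 - (norm (x - x'))\<^sup>2 - 2 * (p \<bullet> (x' - z))"
    and y: "norm (x - y) \<le> norm q"
  shows "2 * (p \<bullet> (y - z)) \<le> (norm (x - z))\<^sup>2 - (norm (x' - z))\<^sup>2 + 2 * (norm p)\<^sup>2 + (norm q)\<^sup>2"
proof -
  have "(norm (x' - x + p))\<^sup>2 = (norm (x - x'))\<^sup>2 + 2 * (p \<bullet> (x' - x)) + (norm p)\<^sup>2"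
    by (simp add: power2_norm_eq_inner inner_commute algebra_simps)
  then have completed_square: "- (norm (x - x'))\<^sup>2 - 2 * (p \<bullet> (x' - x)) \<le> (norm p)\<^sup>2"
    using zero_le_power2[of "norm (x' - x + p)"] by linarith
  have "p \<bullet> (y - x) \<le> norm p * norm (x - y)"
    using norm_cauchy_schwarz[of p "y - x"] by (simp add: norm_minus_commute)
  also have "\<dots> \<le> norm p * norm q"
    using y by (simp add: mult_left_mono)
  finally have "p \<bullet> (y - x) \<le> norm p * norm q" .
  moreover have "2 * (norm p * norm q) \<le> (norm p)\<^sup>2 + (norm q)\<^sup>2"
    using sum_squares_bound[of "norm p" "norm q"] by (simp add: power2_eq_square)
  moreover have "p \<bullet> (y - z) = p \<bullet> (x' - z) - p \<bullet> (x' - x) + p \<bullet> (y - x)"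
    by (simp add: inner_diff_right)
  ultimately show ?thesis using x' completed_square by linarith
qed

lemma nonexpansive_step_power2_le:
  fixes u u' w z :: "'a::real_inner"
  assumes "norm (u' - z) \<le> norm (u + w - z)"
  shows "(norm (u' - z))\<^sup>2 \<le> (norm (u - z))\<^sup>2 + 2 * (w \<bullet> (u - z)) + (norm w)\<^sup>2"
proof -
  have "(norm (u' - z))\<^sup>2 \<le> (norm ((u - z) + w))\<^sup>2"
    using assms by (simp add: power_mono algebra_simps)
  also have "\<dots> = (norm (u - z))\<^sup>2 + 2 * (w \<bullet> (u - z)) + (norm w)\<^sup>2"
    by (simp add: power2_norm_eq_inner inner_commute algebra_simps)
  finally show ?thesis .
qed

lemma extragradient_auxiliary_bound:
  fixes x x' y u u' z V R W :: "'a::real_inner"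
  assumes "c \<ge> 0"
    and x': "(norm (x' - z))\<^sup>2 \<le> (norm (x - z))\<^sup>2 - (norm (x - x'))\<^sup>2 - 2 * c * (V \<bullet> (x' - z))"
    and y: "norm (x - y) \<le> c * norm R"
    and u': "norm (u' - z) \<le> norm (u + c *\<^sub>R W - z)"
  shows "2 * c * ((V - W) \<bullet> (y - z))
    \<le> (norm (x - z))\<^sup>2 - (norm (x' - z))\<^sup>2 + (norm (u - z))\<^sup>2 - (norm (u' - z))\<^sup>2
      + c\<^sup>2 * (2 * (norm V)\<^sup>2 + (norm R)\<^sup>2 + (norm W)\<^sup>2) + 2 * c * (W \<bullet> (u - y))"
proof -
  have "2 * ((c *\<^sub>R V) \<bullet> (y - z))
    \<le> (norm (x - z))\<^sup>2 - (norm (x' - z))\<^sup>2 + 2 * (norm (c *\<^sub>R V))\<^sup>2 + (norm (c *\<^sub>R R))\<^sup>2"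
    using \<open>c \<ge> 0\<close> x' y by (intro extragradient_three_point) auto
  moreover have "(norm (u' - z))\<^sup>2 \<le> (norm (u - z))\<^sup>2 + 2 * ((c *\<^sub>R W) \<bullet> (u - z)) + (norm (c *\<^sub>R W))\<^sup>2"
    using u' by (rule nonexpansive_step_power2_le)
  moreover have "W \<bullet> (u - z) = W \<bullet> (y - z) + W \<bullet> (u - y)"
    by (simp add: inner_diff_right)
  ultimately show ?thesis
    by (simp add: power_mult_distrib inner_diff_left algebra_simps)
qed

lemma subgradient_monotone_gap:
  fixes y z gy Fy Fz :: "'a::real_inner"
  assumes "f z \<ge> f y + gy \<bullet> (z - y)" and "(Fy - Fz) \<bullet> (y - z) \<ge> 0" and "\<rho> \<ge> 0"
  shows "\<rho> * (Fz \<bullet> (y - z)) + (f y - f z) \<le> (gy + \<rho> *\<^sub>R Fy) \<bullet> (y - z)"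
proof -
  have "\<rho> * (Fz \<bullet> (y - z)) \<le> \<rho> * (Fy \<bullet> (y - z))"
    using assms(2,3) by (intro mult_left_mono) (auto simp: inner_diff_left)
  moreover have "f y - f z \<le> gy \<bullet> (y - z)"
    using assms(1) by (simp add: inner_diff_right)
  ultimately show ?thesis by (simp add: inner_add_left)
qed

lemma sampled_steps_power2_bound:
  fixes gy Fy gx Fx wf ef wF eF wft eft wFt eFt :: "'a::real_normed_vector"
    and \<rho> Cf CF :: real
  assumes "norm gy \<le> Cf" "norm gx \<le> Cf" "norm Fy \<le> CF" "norm Fx \<le> CF"
  defines "W \<equiv> wf + ef + \<rho> *\<^sub>R wF + \<rho> *\<^sub>R eF"
  shows "2 * (norm (gy + \<rho> *\<^sub>R Fy + W))\<^sup>2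
      + (norm (gx + \<rho> *\<^sub>R Fx + wft + eft + \<rho> *\<^sub>R wFt + \<rho> *\<^sub>R eFt))\<^sup>2 + (norm W)\<^sup>2
    \<le> 4 * ((6 * Cf\<^sup>2 + 3 * (norm wft)\<^sup>2 + 3 * (norm eft)\<^sup>2 + 4 * (norm wf)\<^sup>2 + 4 * (norm ef)\<^sup>2)
      + \<rho>\<^sup>2 * (6 * CF\<^sup>2 + 3 * (norm wFt)\<^sup>2 + 3 * (norm eFt)\<^sup>2 + 4 * (norm wF)\<^sup>2 + 4 * (norm eF)\<^sup>2))"
proof -
  have "(norm (gy + \<rho> *\<^sub>R Fy + W))\<^sup>2 \<le> 6 * ((norm gy)\<^sup>2 + \<rho>\<^sup>2 * (norm Fy)\<^sup>2
      + (norm wf)\<^sup>2 + (norm ef)\<^sup>2 + \<rho>\<^sup>2 * (norm wF)\<^sup>2 + \<rho>\<^sup>2 * (norm eF)\<^sup>2)"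
    using norm_sum_list_power2_le[of "[gy, \<rho> *\<^sub>R Fy, wf, ef, \<rho> *\<^sub>R wF, \<rho> *\<^sub>R eF]"]
    by (simp add: W_def add.assoc power_mult_distrib)
  moreover have "(norm (gx + \<rho> *\<^sub>R Fx + wft + eft + \<rho> *\<^sub>R wFt + \<rho> *\<^sub>R eFt))\<^sup>2 \<le> 6 * ((norm gx)\<^sup>2
      + \<rho>\<^sup>2 * (norm Fx)\<^sup>2 + (norm wft)\<^sup>2 + (norm eft)\<^sup>2 + \<rho>\<^sup>2 * (norm wFt)\<^sup>2 + \<rho>\<^sup>2 * (norm eFt)\<^sup>2)"
    using norm_sum_list_power2_le[of "[gx, \<rho> *\<^sub>R Fx, wft, eft, \<rho> *\<^sub>R wFt, \<rho> *\<^sub>R eFt]"]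
    by (simp add: add.assoc power_mult_distrib)
  moreover have "(norm W)\<^sup>2 \<le> 4 * ((norm wf)\<^sup>2 + (norm ef)\<^sup>2 + \<rho>\<^sup>2 * (norm wF)\<^sup>2 + \<rho>\<^sup>2 * (norm eF)\<^sup>2)"
    using norm_sum_list_power2_le[of "[wf, ef, \<rho> *\<^sub>R wF, \<rho> *\<^sub>R eF]"]
    by (simp add: W_def add.assoc power_mult_distrib)
  moreover have "(norm gy)\<^sup>2 \<le> Cf\<^sup>2" "(norm gx)\<^sup>2 \<le> Cf\<^sup>2"
    "\<rho>\<^sup>2 * (norm Fy)\<^sup>2 \<le> \<rho>\<^sup>2 * CF\<^sup>2" "\<rho>\<^sup>2 * (norm Fx)\<^sup>2 \<le> \<rho>\<^sup>2 * CF\<^sup>2"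
    using assms(1-4) by (simp_all add: power_mono mult_left_mono)
  moreover have "0 \<le> (norm wft)\<^sup>2" "0 \<le> (norm eft)\<^sup>2" "0 \<le> \<rho>\<^sup>2 * (norm wFt)\<^sup>2"
    "0 \<le> \<rho>\<^sup>2 * (norm eFt)\<^sup>2" "0 \<le> Cf\<^sup>2" "0 \<le> \<rho>\<^sup>2 * CF\<^sup>2"
    by simp_all
  ultimately show ?thesis by (simp only: distrib_left)
qed

lemma powr_rescaled_bound:
  fixes \<gamma> \<rho> n a d t D E \<omega> Af AF r :: real
  assumes "\<gamma> > 0" "\<rho> > 0" "n > 0"
    and gap: "\<rho> * a + d \<le> t"
    and step: "2 * (\<gamma> / n) * t \<le> D + (\<gamma> / n)\<^sup>2 * E + 2 * (\<gamma> / n) * \<omega>"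
    and E: "E \<le> 4 * (Af + \<rho>\<^sup>2 * AF)"
  shows "(\<gamma> * \<rho>) powr r * a + (\<gamma> * \<rho>) powr r / \<rho> * d
    \<le> 0.5 * n * (\<gamma> * \<rho>) powr (r - 1) * D + 2 / n * (\<gamma> * \<rho>) powr (r + 1) / \<rho>\<^sup>2 * Af
      + 2 / n * (\<gamma> * \<rho>) powr (r + 1) * AF + \<gamma> powr r * \<rho> powr (r - 1) * \<omega>"
proof -
  define p where "p = (\<gamma> * \<rho>) powr (r - 1)"
  have p: "p > 0" unfolding p_def using assms(1,2) by simp
  have powr_r: "(\<gamma> * \<rho>) powr r = p * (\<gamma> * \<rho>)"
    unfolding p_def using assms(1,2) powr_add[of "\<gamma> * \<rho>" "r - 1" 1] by simp
  have powr_r1: "(\<gamma> * \<rho>) powr (r + 1) = p * (\<gamma> * \<rho>)\<^sup>2"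
    unfolding p_def using assms(1,2) powr_add[of "\<gamma> * \<rho>" "r - 1" 2] by (simp add: powr_numeral add.commute)
  have powr_split: "\<gamma> powr r * \<rho> powr (r - 1) = p * \<gamma>"
    unfolding p_def using assms(1,2) powr_add[of \<gamma> "r - 1" 1] by (simp add: powr_mult)
  have "2 * (\<gamma> / n) * (\<rho> * a + d) \<le> 2 * (\<gamma> / n) * t"
    using gap assms(1,3) by (intro mult_left_mono) auto
  moreover have "(\<gamma> / n)\<^sup>2 * E \<le> (\<gamma> / n)\<^sup>2 * (4 * (Af + \<rho>\<^sup>2 * AF))"
    using E by (intro mult_left_mono) auto
  ultimately have scaled_step:
      "2 * (\<gamma> / n) * (\<rho> * a + d) \<le> D + (\<gamma> / n)\<^sup>2 * (4 * (Af + \<rho>\<^sup>2 * AF)) + 2 * (\<gamma> / n) * \<omega>"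
    using step by linarith
  have "(\<gamma> * \<rho>) powr r * a + (\<gamma> * \<rho>) powr r / \<rho> * d
      = n / 2 * p * (2 * (\<gamma> / n) * (\<rho> * a + d))"
    unfolding powr_r using assms(2,3) by (simp add: field_simps)
  also have "\<dots> \<le> n / 2 * p * (D + (\<gamma> / n)\<^sup>2 * (4 * (Af + \<rho>\<^sup>2 * AF)) + 2 * (\<gamma> / n) * \<omega>)"
    using scaled_step p assms(3) by (intro mult_left_mono) auto
  also have "\<dots> = 0.5 * n * (\<gamma> * \<rho>) powr (r - 1) * D + 2 / n * (\<gamma> * \<rho>) powr (r + 1) / \<rho>\<^sup>2 * Af
        + 2 / n * (\<gamma> * \<rho>) powr (r + 1) * AF + \<gamma> powr r * \<rho> powr (r - 1) * \<omega>"
    unfolding powr_r1 powr_split p_def[symmetric] using assms(2,3)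
    by (simp add: field_simps power2_eq_square)
  finally show ?thesis .
qed

theorem lemma6:
  fixes N :: nat
    and blk :: "'n::finite \<Rightarrow> nat"
    and Xi :: "nat \<Rightarrow> (real^'n) set"
    and X D :: "(real^'n) set"
    and f :: "real^'n \<Rightarrow> real"
    and F g :: "real^'n \<Rightarrow> real^'n"
    and Fs gs :: "real^'n \<Rightarrow> real^'d::finite \<Rightarrow> real^'n"
    and CF Cf r :: real
    and \<gamma> \<rho> :: "nat \<Rightarrow> real"
    and it ii :: "nat \<Rightarrow> nat"
    and xit xi :: "nat \<Rightarrow> real^'d"
    and x y u :: "nat \<Rightarrow> real^'n"
    and wFt wft wF wf eFt eft eF ef :: "nat \<Rightarrow> real^'n"
    and z :: "real^'n" and k :: nat
  assumes N: "N \<ge> 1"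
    and blk_range: "\<forall>j. blk j \<in> {1..N}"
    and blk_nonempty: "\<forall>i\<in>{1..N}. \<exists>j. blk j = i"
    and Xi_sub: "\<forall>i\<in>{1..N}. Xi i \<subseteq> {v. \<forall>j. blk j \<noteq> i \<longrightarrow> v $ j = 0}"
    and Xi_closed: "\<forall>i\<in>{1..N}. closed (Xi i)"
    and Xi_convex: "\<forall>i\<in>{1..N}. convex (Xi i)"
    and X_def: "X = {v. \<forall>i\<in>{1..N}. blockproj blk i v \<in> Xi i}"
    and X_ne: "X \<noteq> {}"
    and X_compact: "compact X"
    and D_open: "open D"
    and X_D: "X \<subseteq> D"
    and F_cont: "continuous_on D F"
    and F_mono: "\<forall>a\<in>D. \<forall>b\<in>D. (F a - F b) \<bullet> (a - b) \<ge> 0"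
    and f_convex: "convex_on D f"
    and g_subgrad: "\<forall>a\<in>D. \<forall>b\<in>D. f b \<ge> f a + g a \<bullet> (b - a)"
    and CF_pos: "CF > 0" and Cf_pos: "Cf > 0"
    and CF_bound: "\<forall>a\<in>X. norm (F a) \<le> CF"
    and Cf_bound: "\<forall>a\<in>X. \<forall>s. (\<forall>b\<in>D. f b \<ge> f a + s \<bullet> (b - a)) \<longrightarrow> norm s \<le> Cf"
    and \<gamma>_pos: "\<forall>m. \<gamma> m > 0" and \<rho>_pos: "\<forall>m. \<rho> m > 0"
    and r: "r < 1"
    and it_range: "\<forall>m. it m \<in> {1..N}" and ii_range: "\<forall>m. ii m \<in> {1..N}"
    and x0: "x 0 \<in> X" and y0: "y 0 \<in> X"
    and y_step: "\<forall>m. y (Suc m) = x m - blockproj blk (it m) (x m)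
        + closest_point (Xi (it m))
            (blockproj blk (it m) (x m - \<gamma> m *\<^sub>R (gs (x m) (xit m) + \<rho> m *\<^sub>R Fs (x m) (xit m))))"
    and x_step: "\<forall>m. x (Suc m) = x m - blockproj blk (ii m) (x m)
        + closest_point (Xi (ii m))
            (blockproj blk (ii m) (x m - \<gamma> m *\<^sub>R (gs (y (Suc m)) (xi m) + \<rho> m *\<^sub>R Fs (y (Suc m)) (xi m))))"
    and wFt_def: "\<forall>m. wFt m = Fs (x m) (xit m) - F (x m)"
    and wft_def: "\<forall>m. wft m = gs (x m) (xit m) - g (x m)"
    and wF_def: "\<forall>m. wF m = Fs (y (Suc m)) (xi m) - F (y (Suc m))"
    and wf_def: "\<forall>m. wf m = gs (y (Suc m)) (xi m) - g (y (Suc m))"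
    and eFt_def: "\<forall>m. eFt m = real N *\<^sub>R blockproj blk (it m) (Fs (x m) (xit m)) - Fs (x m) (xit m)"
    and eft_def: "\<forall>m. eft m = real N *\<^sub>R blockproj blk (it m) (gs (x m) (xit m)) - gs (x m) (xit m)"
    and eF_def: "\<forall>m. eF m = real N *\<^sub>R blockproj blk (ii m) (Fs (y (Suc m)) (xi m)) - Fs (y (Suc m)) (xi m)"
    and ef_def: "\<forall>m. ef m = real N *\<^sub>R blockproj blk (ii m) (gs (y (Suc m)) (xi m)) - gs (y (Suc m)) (xi m)"
    and u0: "u 0 = x 0"
    and u_step: "\<forall>m. u (Suc m) = closest_point X
        (u m + (\<gamma> m / real N) *\<^sub>R (wf m + ef m + \<rho> m *\<^sub>R wF m + \<rho> m *\<^sub>R eF m))"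
    and z_in: "z \<in> X"
  shows "(\<gamma> k * \<rho> k) powr r * (F z \<bullet> (y (Suc k) - z))
           + (\<gamma> k * \<rho> k) powr r / \<rho> k * (f (y (Suc k)) - f z)
         \<le> 0.5 * real N * (\<gamma> k * \<rho> k) powr (r - 1)
             * ((norm (x k - z))\<^sup>2 - (norm (x (Suc k) - z))\<^sup>2
                + (norm (u k - z))\<^sup>2 - (norm (u (Suc k) - z))\<^sup>2)
           + 2 / real N * (\<gamma> k * \<rho> k) powr (r + 1) / (\<rho> k)\<^sup>2
             * (6 * Cf\<^sup>2 + 3 * (norm (wft k))\<^sup>2 + 3 * (norm (eft k))\<^sup>2
                + 4 * (norm (wf k))\<^sup>2 + 4 * (norm (ef k))\<^sup>2)
           + 2 / real N * (\<gamma> k * \<rho> k) powr (r + 1)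
             * (6 * CF\<^sup>2 + 3 * (norm (wFt k))\<^sup>2 + 3 * (norm (eFt k))\<^sup>2
                + 4 * (norm (wF k))\<^sup>2 + 4 * (norm (eF k))\<^sup>2)
           + \<gamma> k powr r * \<rho> k powr (r - 1)
             * ((wf k + ef k + \<rho> k *\<^sub>R wF k + \<rho> k *\<^sub>R eF k) \<bullet> (u k - y (Suc k)))"
proof -
  have \<gamma>k: "\<gamma> k > 0" and \<rho>k: "\<rho> k > 0" and N_pos: "real N > 0" and N_ne: "real N \<noteq> 0"
    using \<gamma>_pos \<rho>_pos N by auto
  have xX: "x m \<in> X" for m
    using X_def Xi_sub Xi_closed x0 ii_range x_step by (rule block_iterates_in_product)
  have yX: "y (Suc k) \<in> X"
    unfolding y_step[rule_format] using xX it_range Xi_closed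
    by (intro block_update_in_product[OF X_def Xi_sub]) auto
  let ?c = "\<gamma> k / real N"
  let ?W = "wf k + ef k + \<rho> k *\<^sub>R wF k + \<rho> k *\<^sub>R eF k"
  let ?V = "g (y (Suc k)) + \<rho> k *\<^sub>R F (y (Suc k)) + ?W"
  let ?R = "g (x k) + \<rho> k *\<^sub>R F (x k) + wft k + eft k + \<rho> k *\<^sub>R wFt k + \<rho> k *\<^sub>R eFt k"
  have "(norm (x (Suc k) - z))\<^sup>2 \<le> (norm (x k - z))\<^sup>2 - (norm (x k - x (Suc k)))\<^sup>2
      - 2 * (blockproj blk (ii k) (\<gamma> k *\<^sub>R (gs (y (Suc k)) (xi k) + \<rho> k *\<^sub>R Fs (y (Suc k)) (xi k)))
          \<bullet> (x (Suc k) - z))"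
    using ii_range Xi_closed Xi_convex Xi_sub z_in X_def
    by (intro block_projected_step_descent[OF _ _ _ _ x_step[rule_format]]) auto
  then have x_descent: "(norm (x (Suc k) - z))\<^sup>2
      \<le> (norm (x k - z))\<^sup>2 - (norm (x k - x (Suc k)))\<^sup>2 - 2 * ?c * (?V \<bullet> (x (Suc k) - z))"
    by (simp only: blockproj_sampled_step[where a = "g (y (Suc k))" and b = "F (y (Suc k))", OF N_ne])
      (simp add: wf_def ef_def wF_def eF_def add.assoc)
  have "norm (x k - y (Suc k))
      \<le> norm (blockproj blk (it k) (\<gamma> k *\<^sub>R (gs (x k) (xit k) + \<rho> k *\<^sub>R Fs (x k) (xit k))))"
    using it_range Xi_closed Xi_convex xX X_def
    by (intro block_projected_step_norm_le[OF _ _ _ y_step[rule_format]]) auto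
  then have y_near: "norm (x k - y (Suc k)) \<le> ?c * norm ?R"
    using \<gamma>k N_pos
    by (simp only: blockproj_sampled_step[where a = "g (x k)" and b = "F (x k)", OF N_ne])
      (simp add: wft_def eft_def wFt_def eFt_def)
  have u_near: "norm (u (Suc k) - z) \<le> norm (u k + ?c *\<^sub>R ?W - z)"
    using closest_point_lipschitz[OF convex_block_product[OF X_def Xi_convex]
        compact_imp_closed[OF X_compact] X_ne, of _ z] closest_point_self[OF z_in]
    by (simp add: u_step dist_norm)
  have gap: "\<rho> k * (F z \<bullet> (y (Suc k) - z)) + (f (y (Suc k)) - f z)
      \<le> (g (y (Suc k)) + \<rho> k *\<^sub>R F (y (Suc k))) \<bullet> (y (Suc k) - z)"
    using g_subgrad F_mono z_in yX X_D \<rho>k by (intro subgradient_monotone_gap) (blast, blast, simp)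
  have noise: "2 * (norm ?V)\<^sup>2 + (norm ?R)\<^sup>2 + (norm ?W)\<^sup>2
    \<le> 4 * ((6 * Cf\<^sup>2 + 3 * (norm (wft k))\<^sup>2 + 3 * (norm (eft k))\<^sup>2
          + 4 * (norm (wf k))\<^sup>2 + 4 * (norm (ef k))\<^sup>2)
      + (\<rho> k)\<^sup>2 * (6 * CF\<^sup>2 + 3 * (norm (wFt k))\<^sup>2 + 3 * (norm (eFt k))\<^sup>2
          + 4 * (norm (wF k))\<^sup>2 + 4 * (norm (eF k))\<^sup>2))"
    using Cf_bound CF_bound g_subgrad xX yX X_D by (intro sampled_steps_power2_bound) blast+
  show ?thesis
    using extragradient_auxiliary_bound[OF _ x_descent y_near u_near] \<gamma>k N_pos
    by (intro powr_rescaled_bound[OF \<gamma>k \<rho>k N_pos gap _ noise]) auto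
qed

end
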